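(* Let $W:A^{\mathbb{Z}}\times\mathcal{B}^{\mathbb{Z}}\to\mathbb{C}$ be a cq-channel and $K:\mathcal{B}^{\mathbb{Z}}\to B(A^{\mathbb{Z}},\Sigma_c)$, $(K(b))(x)=W(x,b)$, the associated map. (a) The following are equivalent: (1) $K(\mathcal{B}^{\mathbb{Z}})\subseteq C(A^{\mathbb{Z}})$; (2) for each $b\in\mathcal{B}^{\mathbb{Z}}$, $\lim_{n\to\infty}\sup_{x,y\in A^{\mathbb{Z}}:\,x_{-n}^{n}=y_{-n}^{n}}|W(x,b)-W(y,b)|=0$. (b) If $W$ has decaying input memory and anticipation (DIMA), then $K(\mathcal{B}^{\mathbb{Z}})\subseteq C(A^{\mathbb{Z}})$.
   Context: $A$ finite, $\mathcal{B}=\mathcal{L}(\mathcal{H})$ with $\mathcal{H}$ finite-dimensional, $\mathcal{B}^{\mathbb{Z}}$ the quasi-local $C^*$-algebra (norm completion of the union of $\mathcal{B}^{[n,m]}=\bigotimes_{i=n}^m\mathcal{B}$ with natural embeddings). $\Sigma_c$ is the Borel (= cylinder) $\sigma$-field of $A^{\mathbb{Z}}$ with product topology, $B(A^{\mathbb{Z}},\Sigma_c)$ bounded Borel functions, $C(A^{\mathbb{Z}})$ continuous functions. $x_{n}^{m}=(x_n,\dots,x_m)$. A cq-channel is $W:A^{\mathbb{Z}}\times\mathcal{B}^{\mathbb{Z}}\to\mathbb{C}$ with $x\mapsto W(x,b)$ Borel measurable and $b\mapsto W(x,b)$ a state. $W$ is DIMA if for every $\varepsilon>0$ there are nonnegative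 integers $m(\varepsilon),a(\varepsilon)$ such that for all $n\in\mathbb{Z}$, $k\in\mathbb{N}$, all $b\in\mathcal{B}^{[n,n+k]}$ with $0\le b\le\mathbf{1}$, and all $m\ge m(\varepsilon)$, $a\ge a(\varepsilon)$: $|W(x,b)-W(x',b)|\le\varepsilon$ whenever $x_i=x'_i$ for $n-m\le i\le n+k+a$. *)

theory Defs
  imports "HOL-Analysis.Analysis"
begin

text \<open>
  The input alphabet A is a finite type 'a carrying the discrete
  topology; A^Z is the type int => 'a with the product topology (Function_Topology),
  and its Borel sigma-algebra is borel.
  H is a finite-dimensional Hilbert space with orthonormal basis indexed by a finite
  type 'h, i.e. H = l2('h), B = L(H).  A configuration is a map int => 'h; the vectors
  delta_w (w a configuration) form an orthonormal basis of the Hilbert space l2(cfg).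
  An element b of B^[n,m] acts on l2(cfg) as b (x) 1 and is identified with its matrix
  (kernel) K w w' = <delta_w, (b (x) 1) delta_w'>.  This representation of the
  quasi-local algebra is faithful, so B^Z is identified with the set of kernels that
  are pointwise limits of norm-Cauchy sequences of local kernels.
\<close>

type_synonym 'h kernel = "(int \<Rightarrow> 'h) \<Rightarrow> (int \<Rightarrow> 'h) \<Rightarrow> complex"

text \<open>K is (the kernel of) an element of B^I, I a set of sites: K = M (x) 1.\<close>
definition local_on :: "int set \<Rightarrow> 'h kernel \<Rightarrow> bool" where
  "local_on I K \<longleftrightarrow>
     (\<forall>w w'. (\<exists>i. i \<notin> I \<and> w i \<noteq> w' i) \<longrightarrow> K w w' = 0) \<and>
     (\<forall>w w' v v'. (\<forall>i\<in>I. w i = v i \<and> w' i = v' i) \<and>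
                   (\<forall>i. i \<notin> I \<longrightarrow> w i = w' i \<and> v i = v' i)
                   \<longrightarrow> K w w' = K v v')"

definition local_elem :: "'h kernel \<Rightarrow> bool" where
  "local_elem K \<longleftrightarrow> (\<exists>n m. local_on {n..m} K)"

definition fin_vec :: "((int \<Rightarrow> 'h) \<Rightarrow> complex) \<Rightarrow> bool" where
  "fin_vec u \<longleftrightarrow> finite {w. u w \<noteq> 0}"

definition vnorm :: "((int \<Rightarrow> 'h) \<Rightarrow> complex) \<Rightarrow> real" where
  "vnorm u = sqrt (\<Sum>w\<in>{w. u w \<noteq> 0}. (cmod (u w))\<^sup>2)"

definition kform :: "((int \<Rightarrow> 'h) \<Rightarrow> complex) \<Rightarrow> 'h kernel \<Rightarrow> ((int \<Rightarrow> 'h) \<Rightarrow> complex) \<Rightarrow> complex" where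
  "kform u K v = (\<Sum>w\<in>{w. u w \<noteq> 0}. \<Sum>w'\<in>{w'. v w' \<noteq> 0}. cnj (u w) * K w w' * v w')"

definition knorm :: "'h kernel \<Rightarrow> real" where
  "knorm K = (SUP p \<in> {(u, v). fin_vec u \<and> fin_vec v \<and> vnorm u \<le> 1 \<and> vnorm v \<le> 1}.
                 cmod (kform (fst p) K (snd p)))"

definition kadd :: "'h kernel \<Rightarrow> 'h kernel \<Rightarrow> 'h kernel" where
  "kadd K L = (\<lambda>w w'. K w w' + L w w')"

definition kscale :: "complex \<Rightarrow> 'h kernel \<Rightarrow> 'h kernel" where
  "kscale c K = (\<lambda>w w'. c * K w w')"

definition kminus :: "'h kernel \<Rightarrow> 'h kernel \<Rightarrow> 'h kernel" where
  "kminus K L = (\<lambda>w w'. K w w' - L w w')"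

definition kone :: "'h kernel" where
  "kone = (\<lambda>w w'. if w = w' then 1 else 0)"

definition quasi_local :: "'h kernel set" where
  "quasi_local = {K. \<exists>b :: nat \<Rightarrow> 'h kernel.
       (\<forall>n. local_elem (b n)) \<and>
       (\<forall>e>0. \<exists>N. \<forall>p\<ge>N. \<forall>q\<ge>N. knorm (kminus (b p) (b q)) < e) \<and>
       (\<forall>w w'. (\<lambda>n. b n w w') \<longlonglongrightarrow> K w w')}"

definition kpos :: "'h kernel \<Rightarrow> bool" where
  "kpos K \<longleftrightarrow> (\<forall>u. fin_vec u \<longrightarrow> Im (kform u K u) = 0 \<and> 0 \<le> Re (kform u K u))"

definition is_state :: "('h kernel \<Rightarrow> complex) \<Rightarrow> bool" where
  "is_state \<phi> \<longleftrightarrow>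
     (\<forall>K\<in>quasi_local. \<forall>L\<in>quasi_local. \<phi> (kadd K L) = \<phi> K + \<phi> L) \<and>
     (\<forall>c. \<forall>K\<in>quasi_local. \<phi> (kscale c K) = c * \<phi> K) \<and>
     (\<forall>K\<in>quasi_local. kpos K \<longrightarrow> Im (\<phi> K) = 0 \<and> 0 \<le> Re (\<phi> K)) \<and>
     \<phi> kone = 1"

definition cq_channel :: "((int \<Rightarrow> 'a::topological_space) \<Rightarrow> 'h kernel \<Rightarrow> complex) \<Rightarrow> bool" where
  "cq_channel W \<longleftrightarrow>
     (\<forall>b\<in>quasi_local. (\<lambda>x. W x b) \<in> borel_measurable borel) \<and>
     (\<forall>x. is_state (W x))"

definition cq_K :: "((int \<Rightarrow> 'a) \<Rightarrow> 'h kernel \<Rightarrow> complex) \<Rightarrow> 'h kernel \<Rightarrow> (int \<Rightarrow> 'a) \<Rightarrow> complex" where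
  "cq_K W b = (\<lambda>x. W x b)"

definition DIMA :: "((int \<Rightarrow> 'a) \<Rightarrow> 'h kernel \<Rightarrow> complex) \<Rightarrow> bool" where
  "DIMA W \<longleftrightarrow>
     (\<forall>e>0. \<exists>m0 a0 :: nat. \<forall>(n::int) (k::nat) b.
        local_on {n..n + int k} b \<and> kpos b \<and> kpos (kminus kone b) \<longrightarrow>
        (\<forall>m a x x'. m \<ge> m0 \<and> a \<ge> a0 \<and>
            (\<forall>i. n - int m \<le> i \<and> i \<le> n + int k + int a \<longrightarrow> x i = x' i)
            \<longrightarrow> cmod (W x b - W x' b) \<le> e))"

end

theory Submission
  imports Defs
begin

text \<open>
  (a) The full shift is compact and the windows \<open>{y. y i = x i for |i| \<le> n}\<close> form a
  neighbourhood base, so \<open>x \<mapsto> W(x,b)\<close> is continuous iff it is uniformly continuous with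
  respect to these windows. Since a state satisfies \<open>|\<phi> b| \<le> 2\<parallel>b\<parallel>\<close>, the function is bounded
  and the window oscillation is a genuine supremum; uniform continuity says exactly that it
  tends to 0.

  (b) DIMA makes \<open>x \<mapsto> W(x,P)\<close> window-uniformly continuous for every local effect
  \<open>0 \<le> P \<le> 1\<close>. A local self-adjoint \<open>s\<close> with \<open>-r \<le> s \<le> r\<close> is an affine function of the effect
  \<open>(s + r) / 2r\<close>, a local \<open>b\<close> is \<open>Re b + i Im b\<close>, and a quasi-local \<open>b\<close> is approximated by
  local \<open>p\<close> with \<open>|W(x,b) - W(x,p)| \<le> 2\<parallel>b - p\<parallel>\<close> uniformly in \<open>x\<close>.
\<close>

section \<open>Windows and continuity on the full shift\<close>

definition agree_upto :: "nat \<Rightarrow> (int \<Rightarrow> 'a) \<Rightarrow> (int \<Rightarrow> 'a) \<Rightarrow> bool" where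
  "agree_upto n x y \<longleftrightarrow> (\<forall>i. - int n \<le> i \<and> i \<le> int n \<longrightarrow> x i = y i)"

definition cyl_uniformly_continuous :: "((int \<Rightarrow> 'a) \<Rightarrow> complex) \<Rightarrow> bool" where
  "cyl_uniformly_continuous f \<longleftrightarrow>
     (\<forall>e>0. \<exists>n. \<forall>x y. agree_upto n x y \<longrightarrow> cmod (f x - f y) \<le> e)"

definition window_osc :: "((int \<Rightarrow> 'a) \<Rightarrow> complex) \<Rightarrow> nat \<Rightarrow> real" where
  "window_osc f n = (SUP p \<in> {(x, y). agree_upto n x y}. cmod (f (fst p) - f (snd p)))"

lemma agree_upto_refl: "agree_upto n x x"
  by (simp add: agree_upto_def)

lemma agree_upto_sym: "agree_upto n x y \<Longrightarrow> agree_upto n y x"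
  by (simp add: agree_upto_def)

lemma agree_upto_trans: "agree_upto n x y \<Longrightarrow> agree_upto n y z \<Longrightarrow> agree_upto n x z"
  by (simp add: agree_upto_def)

lemma agree_upto_mono: "agree_upto n x y \<Longrightarrow> m \<le> n \<Longrightarrow> agree_upto m x y"
  by (auto simp: agree_upto_def)

lemma open_agree_upto: "open {y :: int \<Rightarrow> 'a::discrete_topology. agree_upto n x y}"
proof -
  have "open {y :: int \<Rightarrow> 'a. \<forall>i\<in>{- int n..int n}. y (id i) \<in> {x i}}"
    by (rule product_topology_basis') (auto simp: open_discrete)
  moreover have "{y. \<forall>i\<in>{- int n..int n}. y (id i) \<in> {x i}} = {y. agree_upto n x y}"
    by (auto simp: agree_upto_def)
  ultimately show ?thesis
    by simp
qed

lemma open_contains_agree_upto: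
  fixes U :: "(int \<Rightarrow> 'a::topological_space) set"
  assumes "open U" "x \<in> U"
  obtains n where "\<And>y. agree_upto n x y \<Longrightarrow> y \<in> U"
proof -
  have "openin (product_topology (\<lambda>_. euclidean) UNIV) U"
    using assms(1) by (simp add: open_fun_def)
  from product_topology_open_contains_basis[OF this assms(2)]
  obtain X where X: "x \<in> (\<Pi>\<^sub>E i\<in>UNIV. X i)" "finite {i. X i \<noteq> UNIV}" "(\<Pi>\<^sub>E i\<in>UNIV. X i) \<subseteq> U"
    by auto
  then obtain k where k: "abs ` {i. X i \<noteq> UNIV} \<subseteq> {..k}"
    unfolding finite_int_iff_bounded_le by blast
  have window: "y i \<in> X i" if "agree_upto (nat k) x y" for y i
  proof (cases "X i = UNIV")
    case False
    then have "\<bar>i\<bar> \<le> k"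
      using k by blast
    then have "- int (nat k) \<le> i" "i \<le> int (nat k)"
      by auto
    then have "x i = y i"
      using that by (simp add: agree_upto_def)
    moreover have "x i \<in> X i"
      using X(1) by (simp add: PiE_iff)
    ultimately show ?thesis
      by simp
  qed simp
  have "y \<in> U" if "agree_upto (nat k) x y" for y
  proof -
    have "y \<in> (\<Pi>\<^sub>E i\<in>UNIV. X i)"
      using window[OF that] by (simp add: PiE_iff)
    then show ?thesis
      using X(3) by blast
  qed
  then show ?thesis
    using that by blast
qed

lemma cyl_uniformly_continuous_imp_continuous:
  fixes f :: "(int \<Rightarrow> 'a::discrete_topology) \<Rightarrow> complex"
  assumes "cyl_uniformly_continuous f"
  shows "continuous_on UNIV f"
  unfolding continuous_on_def
proof (intro ballI tendstoI)
  fix x :: "int \<Rightarrow> 'a" and e :: real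
  assume "e > 0"
  then obtain n where n: "\<And>x y. agree_upto n x y \<Longrightarrow> cmod (f x - f y) \<le> e / 2"
    using assms half_gt_zero unfolding cyl_uniformly_continuous_def by blast
  have "\<forall>\<^sub>F y in nhds x. agree_upto n x y"
    using eventually_nhds_in_open[OF open_agree_upto[of n x]] by (simp add: agree_upto_refl)
  then show "\<forall>\<^sub>F y in at x within UNIV. dist (f y) (f x) < e"
    unfolding eventually_at_filter
  proof (rule eventually_mono)
    fix y
    assume "agree_upto n x y"
    then have "cmod (f y - f x) \<le> e / 2"
      using n agree_upto_sym by blast
    then show "y \<noteq> x \<longrightarrow> y \<in> UNIV \<longrightarrow> dist (f y) (f x) < e"
      using \<open>e > 0\<close> by (simp add: dist_norm)
  qed
qed

lemma continuous_on_agree_upto: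
  fixes f :: "(int \<Rightarrow> 'a::topological_space) \<Rightarrow> 'b::metric_space"
  assumes "continuous_on UNIV f" "e > 0"
  obtains n where "\<And>y. agree_upto n x y \<Longrightarrow> dist (f y) (f x) < e"
proof -
  have "open (f -` ball (f x) e)"
    using assms(1) by (intro open_vimage open_ball)
  moreover have "x \<in> f -` ball (f x) e"
    using assms(2) by simp
  ultimately obtain n where "\<And>y. agree_upto n x y \<Longrightarrow> y \<in> f -` ball (f x) e"
    by (rule open_contains_agree_upto) blast
  then have "\<And>y. agree_upto n x y \<Longrightarrow> dist (f y) (f x) < e"
    by (simp add: dist_commute)
  then show ?thesis
    by (rule that)
qed

lemma compact_UNIV_fun_finite: "compact (UNIV :: (int \<Rightarrow> 'a::{finite,discrete_topology}) set)"
proof -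
  have "compact_space (euclidean :: 'a topology)"
    by (simp add: compact_space_def finite_imp_compact)
  then show ?thesis
    using compact_space_product_topology[of "\<lambda>_::int. euclidean :: 'a topology" UNIV]
    by (simp add: euclidean_product_topology compact_space_def)
qed

text \<open>Uniformity comes from compactness of the full shift: finitely many windows around
  points of a finite net cover it.\<close>
lemma continuous_imp_cyl_uniformly_continuous:
  fixes f :: "(int \<Rightarrow> 'a::{finite,discrete_topology}) \<Rightarrow> complex"
  assumes "continuous_on UNIV f"
  shows "cyl_uniformly_continuous f"
  unfolding cyl_uniformly_continuous_def
proof (intro allI impI)
  fix e :: real
  assume "e > 0"
  have "\<exists>n. \<forall>y. agree_upto n x y \<longrightarrow> dist (f y) (f x) < e / 2" for x
    by (rule continuous_on_agree_upto[OF assms, of "e / 2" x]) (use \<open>e > 0\<close> in auto)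
  then obtain nx where nx: "\<And>x y. agree_upto (nx x) x y \<Longrightarrow> cmod (f y - f x) < e / 2"
    unfolding dist_norm by metis
  have "UNIV \<subseteq> (\<Union>x\<in>UNIV. {y. agree_upto (nx x) x y})"
    using agree_upto_refl by blast
  with compact_UNIV_fun_finite open_agree_upto
  obtain D where D: "finite D" "UNIV \<subseteq> (\<Union>x\<in>D. {y. agree_upto (nx x) x y})"
    by (rule compactE_image)
  have "cmod (f y - f z) \<le> e" if "agree_upto (Max (nx ` D)) y z" for y z
  proof -
    obtain x where x: "x \<in> D" "agree_upto (nx x) x y"
      using D(2) by blast
    have "agree_upto (nx x) y z"
      using D(1) x(1) by (intro agree_upto_mono[OF that]) simp
    then have "agree_upto (nx x) x z"
      by (rule agree_upto_trans[OF x(2)])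
    then have "cmod (f y - f x) < e / 2" "cmod (f z - f x) < e / 2"
      using nx x(2) by auto
    then show ?thesis
      using norm_triangle_ineq4[of "f y - f x" "f z - f x"] by simp
  qed
  then show "\<exists>n. \<forall>y z. agree_upto n y z \<longrightarrow> cmod (f y - f z) \<le> e"
    by blast
qed

lemma continuous_iff_cyl_uniformly_continuous:
  fixes f :: "(int \<Rightarrow> 'a::{finite,discrete_topology}) \<Rightarrow> complex"
  shows "continuous_on UNIV f \<longleftrightarrow> cyl_uniformly_continuous f"
  using continuous_imp_cyl_uniformly_continuous cyl_uniformly_continuous_imp_continuous by blast

lemma window_osc_le_iff:
  assumes "bounded (range f)"
  shows "window_osc f n \<le> e \<longleftrightarrow> (\<forall>x y. agree_upto n x y \<longrightarrow> cmod (f x - f y) \<le> e)"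
proof -
  obtain R where R: "\<And>x. cmod (f x) \<le> R"
    using assms by (auto simp: bounded_iff)
  have "cmod (f x - f y) \<le> R + R" for x y
    using norm_triangle_ineq4[of "f x" "f y"] R[of x] R[of y] by linarith
  then have "bdd_above ((\<lambda>p. cmod (f (fst p) - f (snd p))) ` {(x, y). agree_upto n x y})"
    by (intro bdd_aboveI2) auto
  moreover have "{(x, y). agree_upto n x y} \<noteq> {}"
    using agree_upto_refl by blast
  ultimately show ?thesis
    unfolding window_osc_def by (subst cSUP_le_iff) auto
qed

lemma decseq_nonneg_tendsto_0_iff:
  fixes X :: "nat \<Rightarrow> real"
  assumes "decseq X" "\<And>n. 0 \<le> X n"
  shows "X \<longlonglongrightarrow> 0 \<longleftrightarrow> (\<forall>e>0. \<exists>n. X n \<le> e)"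
proof
  assume lim: "X \<longlonglongrightarrow> 0"
  show "\<forall>e>0. \<exists>n. X n \<le> e"
  proof (intro allI impI)
    fix e :: real
    assume "e > 0"
    then obtain m where "\<forall>n\<ge>m. norm (X n - 0) < e"
      using LIMSEQ_D[OF lim] by blast
    then have "\<bar>X m\<bar> < e"
      by simp
    then show "\<exists>n. X n \<le> e"
      by (intro exI[of _ m]) simp
  qed
next
  assume small: "\<forall>e>0. \<exists>n. X n \<le> e"
  show "X \<longlonglongrightarrow> 0"
  proof (rule LIMSEQ_I)
    fix e :: real
    assume "e > 0"
    then obtain m where "X m \<le> e / 2"
      using small half_gt_zero by blast
    then have "norm (X n - 0) < e" if "n \<ge> m" for n
      using decseqD[OF assms(1) that] assms(2)[of n] \<open>e > 0\<close> by simp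
    then show "\<exists>m. \<forall>n\<ge>m. norm (X n - 0) < e"
      by blast
  qed
qed

lemma cyl_uniformly_continuous_iff_window_osc:
  assumes "bounded (range f)"
  shows "cyl_uniformly_continuous f \<longleftrightarrow> window_osc f \<longlonglongrightarrow> 0"
proof -
  note le_iff = window_osc_le_iff[OF assms]
  have "0 \<le> window_osc f n" for n
  proof (rule ccontr)
    assume "\<not> 0 \<le> window_osc f n"
    moreover have "cmod (f x - f x) \<le> window_osc f n" for x
      using le_iff agree_upto_refl by blast
    ultimately show False
      by simp
  qed
  moreover have "decseq (window_osc f)"
  proof (rule decseq_SucI)
    fix n
    show "window_osc f (Suc n) \<le> window_osc f n"
      unfolding le_iff
    proof (intro allI impI)
      fix x y :: "int \<Rightarrow> 'a"
      assume "agree_upto (Suc n) x y"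
      then have "agree_upto n x y"
        by (rule agree_upto_mono) simp
      then show "cmod (f x - f y) \<le> window_osc f n"
        using le_iff by blast
    qed
  qed
  ultimately have "window_osc f \<longlonglongrightarrow> 0 \<longleftrightarrow> (\<forall>e>0. \<exists>n. window_osc f n \<le> e)"
    by (intro decseq_nonneg_tendsto_0_iff)
  then show ?thesis
    unfolding cyl_uniformly_continuous_def le_iff by blast
qed

lemma cyl_uniformly_continuous_add:
  assumes f: "cyl_uniformly_continuous f" and g: "cyl_uniformly_continuous g"
  shows "cyl_uniformly_continuous (\<lambda>x. f x + g x)"
  unfolding cyl_uniformly_continuous_def
proof (intro allI impI)
  fix e :: real
  assume "e > 0"
  then have "e / 2 > 0"
    by simp
  then obtain m n where
    m: "\<And>x y. agree_upto m x y \<Longrightarrow> cmod (f x - f y) \<le> e / 2" and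
    n: "\<And>x y. agree_upto n x y \<Longrightarrow> cmod (g x - g y) \<le> e / 2"
    using f g unfolding cyl_uniformly_continuous_def by blast
  have "cmod (f x + g x - (f y + g y)) \<le> e" if "agree_upto (max m n) x y" for x y
  proof -
    have "cmod (f x + g x - (f y + g y)) \<le> cmod (f x - f y) + cmod (g x - g y)"
      using norm_triangle_ineq[of "f x - f y" "g x - g y"] by (simp add: algebra_simps)
    then show ?thesis
      using m[OF agree_upto_mono[OF that]] n[OF agree_upto_mono[OF that]] by simp
  qed
  then show "\<exists>n. \<forall>x y. agree_upto n x y \<longrightarrow> cmod (f x + g x - (f y + g y)) \<le> e"
    by blast
qed

lemma cyl_uniformly_continuous_affine:
  assumes "cyl_uniformly_continuous f"
  shows "cyl_uniformly_continuous (\<lambda>x. c * f x + d)"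
  unfolding cyl_uniformly_continuous_def
proof (intro allI impI)
  fix e :: real
  assume "e > 0"
  have "cmod c + 1 > 0"
    by (simp add: add_nonneg_pos)
  then have "e / (cmod c + 1) > 0"
    using \<open>e > 0\<close> by simp
  then obtain n where n: "\<And>x y. agree_upto n x y \<Longrightarrow> cmod (f x - f y) \<le> e / (cmod c + 1)"
    using assms unfolding cyl_uniformly_continuous_def by blast
  have "cmod (c * f x + d - (c * f y + d)) \<le> e" if "agree_upto n x y" for x y
  proof -
    have "cmod (c * f x + d - (c * f y + d)) = cmod c * cmod (f x - f y)"
      by (simp add: norm_mult[symmetric] algebra_simps)
    also have "\<dots> \<le> cmod c * (e / (cmod c + 1))"
      using n[OF that] by (rule mult_left_mono) simp
    also have "\<dots> \<le> e"
      using \<open>e > 0\<close> \<open>cmod c + 1 > 0\<close> by (simp add: pos_divide_le_eq)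
    finally show ?thesis .
  qed
  then show "\<exists>n. \<forall>x y. agree_upto n x y \<longrightarrow> cmod (c * f x + d - (c * f y + d)) \<le> e"
    by blast
qed

lemma cyl_uniformly_continuous_uniform_limit:
  assumes "\<And>e. e > 0 \<Longrightarrow> \<exists>g. cyl_uniformly_continuous g \<and> (\<forall>x. cmod (f x - g x) \<le> e)"
  shows "cyl_uniformly_continuous f"
  unfolding cyl_uniformly_continuous_def
proof (intro allI impI)
  fix e :: real
  assume "e > 0"
  then have "e / 3 > 0"
    by simp
  then obtain g where g: "cyl_uniformly_continuous g" "\<And>x. cmod (f x - g x) \<le> e / 3"
    using assms by blast
  then obtain n where n: "\<And>x y. agree_upto n x y \<Longrightarrow> cmod (g x - g y) \<le> e / 3"
    using \<open>e / 3 > 0\<close> unfolding cyl_uniformly_continuous_def by blast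
  have "cmod (f x - f y) \<le> e" if "agree_upto n x y" for x y
  proof -
    have "cmod (f x - f y) \<le> cmod ((f x - g x) + (g x - g y)) + cmod (f y - g y)"
      using norm_triangle_ineq4[of "(f x - g x) + (g x - g y)" "f y - g y"] by simp
    also have "\<dots> \<le> cmod (f x - g x) + cmod (g x - g y) + cmod (f y - g y)"
      using norm_triangle_ineq[of "f x - g x" "g x - g y"] by simp
    finally show ?thesis
      using g(2)[of x] g(2)[of y] n[OF that] by linarith
  qed
  then show "\<exists>n. \<forall>x y. agree_upto n x y \<longrightarrow> cmod (f x - f y) \<le> e"
    by blast
qed

section \<open>Local kernels\<close>

definition kadj :: "'h kernel \<Rightarrow> 'h kernel" where
  "kadj K = (\<lambda>w w'. cnj (K w' w))"

lemma kminus_eq_kadd_kscale: "kminus K L = kadd K (kscale (-1) L)"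
  by (simp add: kminus_def kadd_def kscale_def fun_eq_iff)

lemma kminus_kadd: "kminus (kadd A B) (kadd C D) = kadd (kminus A C) (kminus B D)"
  by (simp add: kminus_def kadd_def fun_eq_iff)

lemma kminus_kscale: "kminus (kscale c A) (kscale c B) = kscale c (kminus A B)"
  by (simp add: kminus_def kscale_def fun_eq_iff algebra_simps)

lemma kminus_kadj: "kminus (kadj A) (kadj B) = kadj (kminus A B)"
  by (simp add: kminus_def kadj_def fun_eq_iff)

lemma local_onD_off:
  assumes "local_on I K" "i \<notin> I" "w i \<noteq> w' i"
  shows "K w w' = 0"
  using assms unfolding local_on_def by meson

lemma local_onD_eq:
  assumes "local_on I K" "\<forall>i\<in>I. w i = v i \<and> w' i = v' i"
    "\<forall>i. i \<notin> I \<longrightarrow> w i = w' i \<and> v i = v' i"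
  shows "K w w' = K v v'"
proof -
  have "\<forall>w w' v v'. (\<forall>i\<in>I. w i = v i \<and> w' i = v' i) \<and> (\<forall>i. i \<notin> I \<longrightarrow> w i = w' i \<and> v i = v' i)
         \<longrightarrow> K w w' = K v v'"
    using assms(1) unfolding local_on_def by (rule conjunct2)
  then show ?thesis
    using assms(2,3) by blast
qed

lemma local_onI:
  fixes K :: "'h kernel"
  assumes "\<And>w w' i. i \<notin> I \<Longrightarrow> w i \<noteq> w' i \<Longrightarrow> K w w' = 0"
    and "\<And>w w' v v'. \<forall>i\<in>I. w i = v i \<and> w' i = v' i \<Longrightarrow>
           \<forall>i. i \<notin> I \<longrightarrow> w i = w' i \<and> v i = v' i \<Longrightarrow> K w w' = K v v'"
  shows "local_on I K"
  unfolding local_on_def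
proof (intro conjI allI impI)
  fix w w' :: "int \<Rightarrow> 'h"
  assume "\<exists>i. i \<notin> I \<and> w i \<noteq> w' i"
  then show "K w w' = 0"
    using assms(1) by blast
next
  fix w w' v v' :: "int \<Rightarrow> 'h"
  assume "(\<forall>i\<in>I. w i = v i \<and> w' i = v' i) \<and> (\<forall>i. i \<notin> I \<longrightarrow> w i = w' i \<and> v i = v' i)"
  then show "K w w' = K v v'"
    using assms(2) by blast
qed

lemma local_on_pointwise:
  assumes K: "local_on I K" and L: "local_on I L" and "F 0 0 = 0"
  shows "local_on I (\<lambda>w w'. F (K w w') (L w w'))"
proof (rule local_onI)
  show "F (K w w') (L w w') = 0" if "i \<notin> I" "w i \<noteq> w' i" for w w' i
    using local_onD_off[OF K, of i w w'] local_onD_off[OF L, of i w w'] that \<open>F 0 0 = 0\<close> by simp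
  show "F (K w w') (L w w') = F (K v v') (L v v')"
    if "\<forall>i\<in>I. w i = v i \<and> w' i = v' i" "\<forall>i. i \<notin> I \<longrightarrow> w i = w' i \<and> v i = v' i" for w w' v v'
    using local_onD_eq[OF K, of w v w' v'] local_onD_eq[OF L, of w v w' v'] that by simp
qed

lemma local_on_kadd: "local_on I K \<Longrightarrow> local_on I L \<Longrightarrow> local_on I (kadd K L)"
  unfolding kadd_def by (rule local_on_pointwise) auto

lemma local_on_kminus: "local_on I K \<Longrightarrow> local_on I L \<Longrightarrow> local_on I (kminus K L)"
  unfolding kminus_def by (rule local_on_pointwise) auto

lemma local_on_kscale: "local_on I K \<Longrightarrow> local_on I (kscale c K)"
  unfolding kscale_def using local_on_pointwise[of I K K "\<lambda>a _. c * a"] by simp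

lemma local_on_kadj:
  fixes K :: "'h kernel"
  assumes "local_on I K"
  shows "local_on I (kadj K)"
  unfolding kadj_def
proof (rule local_onI)
  show "cnj (K w' w) = 0" if "i \<notin> I" "w i \<noteq> w' i" for w w' :: "int \<Rightarrow> 'h" and i
    using local_onD_off[OF assms, of i w' w] that by simp
  show "cnj (K w' w) = cnj (K v' v)"
    if "\<forall>i\<in>I. w i = v i \<and> w' i = v' i" "\<forall>i. i \<notin> I \<longrightarrow> w i = w' i \<and> v i = v' i"
    for w w' v v' :: "int \<Rightarrow> 'h"
    using local_onD_eq[OF assms, of w' v' w v] that by auto
qed

lemma local_on_kone: "local_on I kone"
proof (rule local_onI)
  show "kone w w' = 0" if "i \<notin> I" "w i \<noteq> w' i" for w w' :: "int \<Rightarrow> 'h" and i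
    using that by (auto simp: kone_def)
  show "kone w w' = kone v v'"
    if "\<forall>i\<in>I. w i = v i \<and> w' i = v' i" "\<forall>i. i \<notin> I \<longrightarrow> w i = w' i \<and> v i = v' i"
    for w w' v v' :: "int \<Rightarrow> 'h"
  proof -
    have "w i = w' i \<longleftrightarrow> v i = v' i" for i
      using that by (cases "i \<in> I") auto
    then have "w = w' \<longleftrightarrow> v = v'"
      by (auto simp: fun_eq_iff)
    then show ?thesis
      by (simp add: kone_def)
  qed
qed

lemma local_on_mono:
  fixes K :: "'h kernel"
  assumes K: "local_on I K" and "I \<subseteq> J"
  shows "local_on J K"
proof (rule local_onI)
  show "K w w' = 0" if "i \<notin> J" "w i \<noteq> w' i" for w w' :: "int \<Rightarrow> 'h" and i
    using local_onD_off[OF K] that \<open>I \<subseteq> J\<close> by blast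
  fix w w' v v' :: "int \<Rightarrow> 'h"
  assume on_J: "\<forall>i\<in>J. w i = v i \<and> w' i = v' i"
    and off_J: "\<forall>i. i \<notin> J \<longrightarrow> w i = w' i \<and> v i = v' i"
  show "K w w' = K v v'"
  proof (cases "\<forall>i. i \<notin> I \<longrightarrow> w i = w' i")
    case True
    have "v i = v' i" if "i \<notin> I" for i
      using True that on_J off_J by (cases "i \<in> J") auto
    with True have "\<forall>i. i \<notin> I \<longrightarrow> w i = w' i \<and> v i = v' i"
      by blast
    then show ?thesis
      using local_onD_eq[OF K] on_J \<open>I \<subseteq> J\<close> by blast
  next
    case False
    then obtain i where "i \<notin> I" "w i \<noteq> w' i"
      by blast
    moreover have "v i \<noteq> v' i"
      using calculation on_J off_J by (cases "i \<in> J") auto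
    ultimately show ?thesis
      using local_onD_off[OF K, of i] by simp
  qed
qed

lemma local_elem_join:
  assumes "local_elem K" "local_elem L"
  obtains n m where "local_on {n..m} K" "local_on {n..m} L"
proof -
  obtain n m n' m' where "local_on {n..m} K" "local_on {n'..m'} L"
    using assms unfolding local_elem_def by blast
  then have "local_on {min n n'..max m m'} K" "local_on {min n n'..max m m'} L"
    by (auto elim!: local_on_mono)
  then show ?thesis
    using that by blast
qed

lemma local_elem_kadd:
  assumes "local_elem K" "local_elem L"
  shows "local_elem (kadd K L)"
proof -
  obtain n m where "local_on {n..m} K" "local_on {n..m} L"
    using assms by (rule local_elem_join)
  then show ?thesis
    unfolding local_elem_def by (blast intro: local_on_kadd)
qed

lemma local_elem_kscale: "local_elem K \<Longrightarrow> local_elem (kscale c K)"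
  unfolding local_elem_def using local_on_kscale by blast

lemma local_elem_kadj: "local_elem K \<Longrightarrow> local_elem (kadj K)"
  unfolding local_elem_def using local_on_kadj by blast

lemma local_elem_kone: "local_elem kone"
  unfolding local_elem_def using local_on_kone by blast

lemma local_elemE:
  assumes "local_elem K"
  obtains n k where "local_on {n..n + int k} K"
proof -
  obtain n m where "local_on {n..m} K"
    using assms unfolding local_elem_def by blast
  then have "local_on {n..n + int (nat (m - n))} K"
    by (rule local_on_mono) auto
  then show ?thesis
    using that by blast
qed

section \<open>Bounded forms\<close>

lemma kform_kadd: "kform u (kadd K L) v = kform u K v + kform u L v"
  by (simp add: kform_def kadd_def algebra_simps sum.distrib)

lemma kform_kminus: "kform u (kminus K L) v = kform u K v - kform u L v"
  by (simp add: kform_def kminus_def algebra_simps sum_subtractf)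

lemma kform_kscale: "kform u (kscale c K) v = c * kform u K v"
  by (simp add: kform_def kscale_def sum_distrib_left mult_ac)

lemma kform_kadj: "kform u (kadj K) v = cnj (kform v K u)"
  unfolding kform_def kadj_def by (subst sum.swap) (simp add: mult_ac)

lemma vnorm_nonneg: "0 \<le> vnorm u"
  by (simp add: vnorm_def sum_nonneg)

lemma vnorm_square: "(vnorm u)\<^sup>2 = (\<Sum>w\<in>{w. u w \<noteq> 0}. (cmod (u w))\<^sup>2)"
  by (simp add: vnorm_def sum_nonneg)

lemma kform_kone:
  assumes "fin_vec u"
  shows "kform u kone u = of_real ((vnorm u)\<^sup>2)"
proof -
  have "kform u kone u
      = (\<Sum>w\<in>{w. u w \<noteq> 0}. \<Sum>w'\<in>{w. u w \<noteq> 0}. if w = w' then cnj (u w) * u w' else 0)"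
    unfolding kform_def kone_def by (intro sum.cong) auto
  also have "\<dots> = (\<Sum>w\<in>{w. u w \<noteq> 0}. cnj (u w) * u w)"
    using assms by (simp add: fin_vec_def)
  also have "\<dots> = (\<Sum>w\<in>{w. u w \<noteq> 0}. of_real ((cmod (u w))\<^sup>2))"
    by (intro sum.cong) (simp_all only: complex_norm_square mult.commute)
  finally show ?thesis
    by (simp add: vnorm_square)
qed

lemma kform_eq_0_if_vnorm_eq_0:
  assumes "fin_vec u" "fin_vec v" "vnorm u = 0 \<or> vnorm v = 0"
  shows "kform u K v = 0"
proof -
  have empty: "{w. z w \<noteq> 0} = {}" if "fin_vec z" "vnorm z = 0" for z :: "(int \<Rightarrow> 'h) \<Rightarrow> complex"
    using that by (auto simp: fin_vec_def vnorm_def sum_nonneg_eq_0_iff)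
  show ?thesis
  proof (cases "vnorm u = 0")
    case True
    then have "{w. u w \<noteq> 0} = {}"
      using empty[OF assms(1)] by blast
    then show ?thesis
      unfolding kform_def by (simp only: sum.empty)
  next
    case False
    then have "{w. v w \<noteq> 0} = {}"
      using empty[OF assms(2)] assms(3) by blast
    then show ?thesis
      unfolding kform_def by (simp only: sum.empty sum.neutral_const)
  qed
qed

lemma fin_vec_scale: "fin_vec u \<Longrightarrow> fin_vec (\<lambda>w. c * u w)"
  unfolding fin_vec_def by (rule finite_subset[rotated]) auto

lemma vnorm_scale: "vnorm (\<lambda>w. c * u w) = cmod c * vnorm u"
proof (cases "c = 0")
  case False
  then have "(\<Sum>w\<in>{w. u w \<noteq> 0}. (cmod (c * u w))\<^sup>2) = (cmod c)\<^sup>2 * (\<Sum>w\<in>{w. u w \<noteq> 0}. (cmod (u w))\<^sup>2)"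
    by (simp add: norm_mult power_mult_distrib sum_distrib_left)
  then show ?thesis
    using False by (simp add: vnorm_def real_sqrt_mult)
qed (simp add: vnorm_def)

lemma kform_scale:
  "kform (\<lambda>w. a * u w) K (\<lambda>w. c * v w) = cnj a * c * kform u K v"
proof (cases "a = 0 \<or> c = 0")
  case False
  then show ?thesis
    by (simp add: kform_def sum_distrib_left mult_ac)
qed (auto simp: kform_def)

definition form_bounded :: "real \<Rightarrow> 'h kernel \<Rightarrow> bool" where
  "form_bounded r K \<longleftrightarrow>
     (\<forall>u v. fin_vec u \<longrightarrow> fin_vec v \<longrightarrow> cmod (kform u K v) \<le> r * vnorm u * vnorm v)"

lemma form_boundedI:
  fixes K :: "'h kernel"
  assumes "\<And>u v. fin_vec u \<Longrightarrow> fin_vec v \<Longrightarrow> vnorm u \<le> 1 \<Longrightarrow> vnorm v \<le> 1 \<Longrightarrow>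
             cmod (kform u K v) \<le> r"
  shows "form_bounded r K"
  unfolding form_bounded_def
proof (intro allI impI)
  fix u v :: "(int \<Rightarrow> 'h) \<Rightarrow> complex"
  assume u: "fin_vec u" and v: "fin_vec v"
  show "cmod (kform u K v) \<le> r * vnorm u * vnorm v"
  proof (cases "vnorm u = 0 \<or> vnorm v = 0")
    case True
    then show ?thesis
      using kform_eq_0_if_vnorm_eq_0[OF u v] by auto
  next
    case False
    then have pos: "vnorm u > 0" "vnorm v > 0"
      using vnorm_nonneg[of u] vnorm_nonneg[of v] by auto
    define a where "a = complex_of_real (1 / vnorm u)"
    define c where "c = complex_of_real (1 / vnorm v)"
    have "vnorm (\<lambda>w. a * u w) = 1" "vnorm (\<lambda>w. c * v w) = 1"
      unfolding vnorm_scale using pos by (simp_all add: a_def c_def norm_divide)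
    then have "cmod (kform (\<lambda>w. a * u w) K (\<lambda>w. c * v w)) \<le> r"
      by (intro assms fin_vec_scale u v) simp_all
    then have "cmod (kform u K v) / (vnorm u * vnorm v) \<le> r"
      unfolding kform_scale using pos by (simp add: a_def c_def norm_mult norm_divide)
    then show ?thesis
      using pos by (simp add: divide_le_eq mult_ac)
  qed
qed

lemma form_bounded_unit:
  assumes "form_bounded r K" "0 \<le> r" "fin_vec u" "fin_vec v" "vnorm u \<le> 1" "vnorm v \<le> 1"
  shows "cmod (kform u K v) \<le> r"
proof -
  have "cmod (kform u K v) \<le> r * vnorm u * vnorm v"
    using assms unfolding form_bounded_def by blast
  also have "\<dots> \<le> r"
    using assms vnorm_nonneg[of u] vnorm_nonneg[of v]
    by (metis mult.assoc mult_le_one mult_left_le)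
  finally show ?thesis .
qed

lemma form_bounded_mono: "form_bounded r K \<Longrightarrow> r \<le> s \<Longrightarrow> form_bounded s K"
  unfolding form_bounded_def
  by (meson order_trans mult_right_mono vnorm_nonneg)

lemma form_bounded_kadd:
  fixes K L :: "'h kernel"
  assumes "form_bounded r K" "form_bounded s L"
  shows "form_bounded (r + s) (kadd K L)"
  unfolding form_bounded_def
proof (intro allI impI)
  fix u v :: "(int \<Rightarrow> 'h) \<Rightarrow> complex"
  assume "fin_vec u" "fin_vec v"
  then have "cmod (kform u K v) \<le> r * vnorm u * vnorm v" "cmod (kform u L v) \<le> s * vnorm u * vnorm v"
    using assms unfolding form_bounded_def by blast+
  then show "cmod (kform u (kadd K L) v) \<le> (r + s) * vnorm u * vnorm v"
    using norm_triangle_ineq[of "kform u K v" "kform u L v"] by (simp add: kform_kadd algebra_simps)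
qed

lemma form_bounded_kscale: "form_bounded r K \<Longrightarrow> form_bounded (cmod c * r) (kscale c K)"
  unfolding form_bounded_def kform_kscale norm_mult
  by (simp add: mult.assoc mult_left_mono)

lemma form_bounded_kminus: "form_bounded r K \<Longrightarrow> form_bounded s L \<Longrightarrow> form_bounded (r + s) (kminus K L)"
  unfolding kminus_eq_kadd_kscale using form_bounded_kadd form_bounded_kscale[of s L "-1"] by fastforce

lemma form_bounded_kadj: "form_bounded r K \<Longrightarrow> form_bounded r (kadj K)"
  unfolding form_bounded_def kform_kadj complex_mod_cnj
  by (metis mult.assoc mult.commute)

lemma form_bounded_tendsto:
  fixes F :: "nat \<Rightarrow> 'h kernel"
  assumes "\<And>w w'. (\<lambda>n. F n w w') \<longlonglongrightarrow> G w w'" "\<And>n. n \<ge> N \<Longrightarrow> form_bounded r (F n)"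
  shows "form_bounded r G"
  unfolding form_bounded_def
proof (intro allI impI)
  fix u v :: "(int \<Rightarrow> 'h) \<Rightarrow> complex"
  assume "fin_vec u" "fin_vec v"
  have "(\<lambda>n. cmod (kform u (F n) v)) \<longlonglongrightarrow> cmod (kform u G v)"
    unfolding kform_def by (intro tendsto_intros assms)
  moreover have "\<forall>n\<ge>N. cmod (kform u (F n) v) \<le> r * vnorm u * vnorm v"
    using assms(2) \<open>fin_vec u\<close> \<open>fin_vec v\<close> unfolding form_bounded_def by blast
  ultimately show "cmod (kform u G v) \<le> r * vnorm u * vnorm v"
    using LIMSEQ_le_const2 by blast
qed

lemma sum_sum_if_le:
  fixes a :: "'b \<Rightarrow> real"
  assumes "finite V" "\<And>w. card {w'\<in>V. E w w'} \<le> N" "\<And>w. 0 \<le> a w"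
  shows "(\<Sum>w\<in>U. \<Sum>w'\<in>V. if E w w' then a w else 0) \<le> real N * (\<Sum>w\<in>U. a w)"
proof -
  have "(\<Sum>w'\<in>V. if E w w' then a w else 0) = (\<Sum>w'\<in>{w'\<in>V. E w w'}. a w)" for w
    by (rule sum.inter_filter[OF assms(1), symmetric])
  then have "(\<Sum>w\<in>U. \<Sum>w'\<in>V. if E w w' then a w else 0) = (\<Sum>w\<in>U. real (card {w'\<in>V. E w w'}) * a w)"
    by simp
  also have "\<dots> \<le> (\<Sum>w\<in>U. real N * a w)"
    using assms(2,3) by (intro sum_mono mult_right_mono) auto
  finally show ?thesis
    by (simp add: sum_distrib_left)
qed

lemma mult_le_mean_square:
  fixes a b k c :: real
  assumes "0 \<le> a" "0 \<le> b" "0 \<le> k" "k \<le> c"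
  shows "a * k * b \<le> c * ((a\<^sup>2 + b\<^sup>2) / 2)"
proof -
  have "a * b \<le> (a\<^sup>2 + b\<^sup>2) / 2"
    using sum_squares_ge_zero[of "a - b" 0] by (simp add: power2_eq_square algebra_simps)
  then have "k * (a * b) \<le> c * ((a\<^sup>2 + b\<^sup>2) / 2)"
    using assms by (intro mult_mono) auto
  then show ?thesis
    by (simp add: mult_ac)
qed

text \<open>Schur test; the product \<open>|u w| |v w'|\<close> is split by AM-GM.\<close>
lemma form_bounded_schur:
  fixes K :: "'h kernel"
  assumes K: "\<And>w w'. cmod (K w w') \<le> (if E w w' then C else 0)" and "0 \<le> C"
    and E_sym: "\<And>w w'. E w w' \<longleftrightarrow> E w' w"
    and rows: "\<And>w V. finite V \<Longrightarrow> card {w'\<in>V. E w w'} \<le> N"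
  shows "form_bounded (C * real N) K"
proof (rule form_boundedI)
  fix u v :: "(int \<Rightarrow> 'h) \<Rightarrow> complex"
  assume "fin_vec u" "fin_vec v" "vnorm u \<le> 1" "vnorm v \<le> 1"
  define U where "U = {w. u w \<noteq> 0}"
  define V where "V = {w. v w \<noteq> 0}"
  define a where "a w = (cmod (u w))\<^sup>2" for w
  define b where "b w = (cmod (v w))\<^sup>2" for w
  have fin: "finite U" "finite V"
    using \<open>fin_vec u\<close> \<open>fin_vec v\<close> by (simp_all add: fin_vec_def U_def V_def)
  have "(vnorm u)\<^sup>2 \<le> 1" "(vnorm v)\<^sup>2 \<le> 1"
    using \<open>vnorm u \<le> 1\<close> \<open>vnorm v \<le> 1\<close> vnorm_nonneg[of u] vnorm_nonneg[of v]
    by (simp_all add: power_le_one)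
  then have su: "(\<Sum>w\<in>U. a w) \<le> 1" and sv: "(\<Sum>w\<in>V. b w) \<le> 1"
    by (simp_all add: vnorm_square U_def V_def a_def b_def)
  have amgm: "cmod (u w) * cmod (K w w') * cmod (v w') \<le> (if E w w' then C else 0) * ((a w + b w') / 2)"
    for w w'
    unfolding a_def b_def by (rule mult_le_mean_square) (use K in auto)
  have split: "(if E w w' then C else 0) * ((a w + b w') / 2)
      = C / 2 * (if E w w' then a w else 0) + C / 2 * (if E w w' then b w' else 0)" for w w'
    by (simp add: distrib_left)
  have "cmod (kform u K v) \<le> (\<Sum>w\<in>U. \<Sum>w'\<in>V. cmod (u w) * cmod (K w w') * cmod (v w'))"
    unfolding kform_def U_def V_def
    by (rule order_trans[OF norm_sum sum_mono], rule order_trans[OF norm_sum])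
      (simp add: norm_mult)
  also have "\<dots> \<le> (\<Sum>w\<in>U. \<Sum>w'\<in>V. (if E w w' then C else 0) * ((a w + b w') / 2))"
    by (intro sum_mono amgm)
  also have "\<dots> = C / 2 * (\<Sum>w\<in>U. \<Sum>w'\<in>V. if E w w' then a w else 0)
      + C / 2 * (\<Sum>w\<in>U. \<Sum>w'\<in>V. if E w w' then b w' else 0)"
    by (simp only: split sum.distrib sum_distrib_left)
  also have "(\<Sum>w\<in>U. \<Sum>w'\<in>V. if E w w' then b w' else 0) = (\<Sum>w'\<in>V. \<Sum>w\<in>U. if E w' w then b w' else 0)"
    by (subst sum.swap) (simp add: E_sym)
  also have "(\<Sum>w\<in>U. \<Sum>w'\<in>V. if E w w' then a w else 0) \<le> real N"
    by (rule order_trans[OF sum_sum_if_le[OF fin(2) rows[OF fin(2)]] mult_left_le[OF su]])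
      (simp_all add: a_def)
  also have "(\<Sum>w'\<in>V. \<Sum>w\<in>U. if E w' w then b w' else 0) \<le> real N"
    by (rule order_trans[OF sum_sum_if_le[OF fin(1) rows[OF fin(1)]] mult_left_le[OF sv]])
      (simp_all add: b_def)
  finally show "cmod (kform u K v) \<le> C * real N"
    using \<open>0 \<le> C\<close> by (simp add: mult_left_mono)
qed

lemma local_on_restrict:
  assumes "local_on I K" "\<forall>i. i \<notin> I \<longrightarrow> w i = w' i"
  shows "K w w' = K (restrict w I) (restrict w' I)"
  by (rule local_onD_eq[OF assms(1)]) (use assms(2) in auto)

lemma card_agree_off_le:
  fixes w :: "int \<Rightarrow> 'h::finite"
  assumes "finite I"
  shows "card {w'\<in>V. \<forall>i. i \<notin> I \<longrightarrow> w i = w' i} \<le> card (Pi\<^sub>E I (\<lambda>_. UNIV :: 'h set))"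
proof -
  have "inj_on (\<lambda>w'. restrict w' I) {w'\<in>V. \<forall>i. i \<notin> I \<longrightarrow> w i = w' i}"
  proof (rule inj_onI)
    fix x y
    assume "x \<in> {w'\<in>V. \<forall>i. i \<notin> I \<longrightarrow> w i = w' i}" "y \<in> {w'\<in>V. \<forall>i. i \<notin> I \<longrightarrow> w i = w' i}"
      and eq: "restrict x I = restrict y I"
    have "x i = y i" for i
    proof (cases "i \<in> I")
      case True
      then show ?thesis
        using fun_cong[OF eq, of i] by simp
    qed (use \<open>x \<in> _\<close> \<open>y \<in> _\<close> in auto)
    then show "x = y"
      by blast
  qed
  moreover have "(\<lambda>w'. restrict w' I) ` {w'\<in>V. \<forall>i. i \<notin> I \<longrightarrow> w i = w' i} \<subseteq> Pi\<^sub>E I (\<lambda>_. UNIV)"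
    by auto
  ultimately show ?thesis
    using assms by (intro card_inj_on_le) (simp_all add: finite_PiE)
qed

lemma local_on_form_bounded:
  fixes K :: "'h::finite kernel"
  assumes K: "local_on I K" and "finite I"
  obtains r where "0 \<le> r" "form_bounded r K"
proof -
  define S where "S = (Pi\<^sub>E I (\<lambda>_. UNIV) :: (int \<Rightarrow> 'h) set)"
  define C where "C = (\<Sum>p\<in>S \<times> S. cmod (K (fst p) (snd p)))"
  define E where "E w w' \<longleftrightarrow> (\<forall>i. i \<notin> I \<longrightarrow> w i = w' i)" for w w' :: "int \<Rightarrow> 'h"
  have "finite S" "0 \<le> C"
    using \<open>finite I\<close> by (simp_all add: S_def C_def finite_PiE sum_nonneg)
  have bound: "cmod (K w w') \<le> (if E w w' then C else 0)" for w w'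
  proof (cases "E w w'")
    case True
    then have "K w w' = K (restrict w I) (restrict w' I)"
      unfolding E_def by (rule local_on_restrict[OF K])
    moreover have "(restrict w I, restrict w' I) \<in> S \<times> S"
      by (simp add: S_def)
    ultimately show ?thesis
      using True \<open>finite S\<close>
        member_le_sum[of "(restrict w I, restrict w' I)" "S \<times> S" "\<lambda>p. cmod (K (fst p) (snd p))"]
      by (simp add: C_def)
  qed (use local_onD_off[OF K] in \<open>auto simp: E_def\<close>)
  have "form_bounded (C * real (card S)) K"
  proof (rule form_bounded_schur[OF bound \<open>0 \<le> C\<close>])
    show "E w w' \<longleftrightarrow> E w' w" for w w'
      by (auto simp: E_def)
    show "card {w'\<in>V. E w w'} \<le> card S" for w V
      unfolding E_def S_def by (rule card_agree_off_le[OF \<open>finite I\<close>])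
  qed
  then show ?thesis
    using that \<open>0 \<le> C\<close> by (meson of_nat_0_le_iff mult_nonneg_nonneg)
qed

lemma local_elem_form_bounded:
  fixes K :: "'h::finite kernel"
  assumes "local_elem K"
  obtains r where "0 \<le> r" "form_bounded r K"
proof -
  obtain n m where "local_on {n..m} K"
    using assms unfolding local_elem_def by blast
  from local_on_form_bounded[OF this finite_atLeastAtMost_int] that show ?thesis
    by blast
qed

section \<open>The quasi-local algebra\<close>

lemma knorm_le:
  fixes K :: "'h kernel"
  assumes "\<And>u v. fin_vec u \<Longrightarrow> fin_vec v \<Longrightarrow> vnorm u \<le> 1 \<Longrightarrow> vnorm v \<le> 1 \<Longrightarrow>
             cmod (kform u K v) \<le> c"
  shows "knorm K \<le> c"
proof -
  have "((\<lambda>_. 0), (\<lambda>_. 0)) \<in> {(u, v). fin_vec u \<and> fin_vec v \<and> vnorm u \<le> 1 \<and> vnorm v \<le> 1}"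
    by (simp add: fin_vec_def vnorm_def)
  then show ?thesis
    unfolding knorm_def using assms by (intro cSUP_least) auto
qed

lemma knorm_ge:
  fixes K :: "'h kernel"
  assumes "form_bounded r K" "fin_vec u" "fin_vec v" "vnorm u \<le> 1" "vnorm v \<le> 1"
  shows "cmod (kform u K v) \<le> knorm K"
proof -
  let ?B = "{(u, v). fin_vec u \<and> fin_vec v \<and> vnorm u \<le> 1 \<and> vnorm v \<le> 1}"
  have "form_bounded (max r 0) K"
    using assms(1) by (rule form_bounded_mono) simp
  then have "bdd_above ((\<lambda>p. cmod (kform (fst p) K (snd p))) ` ?B)"
    by (intro bdd_aboveI2[where M = "max r 0"]) (auto intro: form_bounded_unit)
  moreover have "(u, v) \<in> ?B"
    using assms by simp
  ultimately show ?thesis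
    unfolding knorm_def by (metis (no_types, lifting) cSUP_upper fst_conv snd_conv)
qed

lemma form_bounded_knorm:
  fixes K :: "'h kernel"
  shows "form_bounded r K \<Longrightarrow> form_bounded (knorm K) K"
  by (rule form_boundedI) (rule knorm_ge)

text \<open>\<^const>\<open>knorm\<close> is a supremum and carries information only for bounded forms, so the
  Cauchy condition of \<^const>\<open>quasi_local\<close> is restated in terms of \<^const>\<open>form_bounded\<close>.\<close>
lemma quasi_localE:
  fixes K :: "'h::finite kernel"
  assumes "K \<in> quasi_local"
  obtains b where "\<And>n. local_elem (b n)" "\<And>w w'. (\<lambda>n. b n w w') \<longlonglongrightarrow> K w w'"
    "\<And>e. e > 0 \<Longrightarrow> \<exists>N. \<forall>p\<ge>N. \<forall>q\<ge>N. form_bounded e (kminus (b p) (b q))"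
proof -
  obtain b where b: "\<And>n. local_elem (b n)" "\<And>w w'. (\<lambda>n. b n w w') \<longlonglongrightarrow> K w w'"
    and cauchy: "\<And>e. e > 0 \<Longrightarrow> \<exists>N. \<forall>p\<ge>N. \<forall>q\<ge>N. knorm (kminus (b p) (b q)) < e"
    using assms unfolding quasi_local_def by blast
  have "form_bounded (knorm (kminus (b p) (b q))) (kminus (b p) (b q))" for p q
  proof -
    obtain r s where "form_bounded r (b p)" "form_bounded s (b q)"
      using local_elem_form_bounded b(1) by metis
    then show ?thesis
      by (rule form_bounded_knorm[OF form_bounded_kminus])
  qed
  then have "\<exists>N. \<forall>p\<ge>N. \<forall>q\<ge>N. form_bounded e (kminus (b p) (b q))" if "e > 0" for e
    using cauchy[OF that] by (meson form_bounded_mono less_imp_le)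
  with b that show ?thesis
    by blast
qed

lemma quasi_localI:
  fixes K :: "'h kernel"
  assumes "\<And>n. local_elem (b n)" "\<And>w w'. (\<lambda>n. b n w w') \<longlonglongrightarrow> K w w'"
    and cauchy: "\<And>e. e > 0 \<Longrightarrow> \<exists>N. \<forall>p\<ge>N. \<forall>q\<ge>N. form_bounded e (kminus (b p) (b q))"
  shows "K \<in> quasi_local"
proof -
  have "\<exists>N. \<forall>p\<ge>N. \<forall>q\<ge>N. knorm (kminus (b p) (b q)) < e" if "e > 0" for e
  proof -
    obtain N where "\<forall>p\<ge>N. \<forall>q\<ge>N. form_bounded (e / 2) (kminus (b p) (b q))"
      using cauchy \<open>e > 0\<close> half_gt_zero by blast
    then have "knorm (kminus (b p) (b q)) \<le> e / 2" if "p \<ge> N" "q \<ge> N" for p q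
      using that \<open>e > 0\<close> by (intro knorm_le form_bounded_unit[where r = "e / 2"]) auto
    then have "knorm (kminus (b p) (b q)) < e" if "p \<ge> N" "q \<ge> N" for p q
      using that \<open>e > 0\<close> by fastforce
    then show ?thesis
      by blast
  qed
  then show ?thesis
    unfolding quasi_local_def using assms(1,2) by blast
qed

lemma local_elem_quasi_local:
  fixes K :: "'h kernel"
  assumes "local_elem K"
  shows "K \<in> quasi_local"
proof (rule quasi_localI[where b = "\<lambda>_. K"])
  have "form_bounded 0 (kminus K K)"
    by (simp add: form_bounded_def kform_kminus)
  then show "\<exists>N. \<forall>p\<ge>N. \<forall>q\<ge>N. form_bounded e (kminus K K)" if "e > 0" for e
    using form_bounded_mono[of 0 "kminus K K" e] that by auto
qed (use assms in auto)

lemma quasi_local_kone: "kone \<in> quasi_local"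
  by (intro local_elem_quasi_local local_elem_kone)

lemma quasi_local_kadd:
  fixes K L :: "'h::finite kernel"
  assumes "K \<in> quasi_local" "L \<in> quasi_local"
  shows "kadd K L \<in> quasi_local"
proof -
  obtain b where b: "\<And>n. local_elem (b n)" "\<And>w w'. (\<lambda>n. b n w w') \<longlonglongrightarrow> K w w'"
    "\<And>e. e > 0 \<Longrightarrow> \<exists>N. \<forall>p\<ge>N. \<forall>q\<ge>N. form_bounded e (kminus (b p) (b q))"
    using assms(1) by (rule quasi_localE) blast
  obtain c where c: "\<And>n. local_elem (c n)" "\<And>w w'. (\<lambda>n. c n w w') \<longlonglongrightarrow> L w w'"
    "\<And>e. e > 0 \<Longrightarrow> \<exists>N. \<forall>p\<ge>N. \<forall>q\<ge>N. form_bounded e (kminus (c p) (c q))"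
    using assms(2) by (rule quasi_localE) blast
  show ?thesis
  proof (rule quasi_localI[where b = "\<lambda>n. kadd (b n) (c n)"])
    show "local_elem (kadd (b n) (c n))" for n
      using b(1) c(1) by (rule local_elem_kadd)
    show "(\<lambda>n. kadd (b n) (c n) w w') \<longlonglongrightarrow> kadd K L w w'" for w w'
      unfolding kadd_def using b(2) c(2) by (rule tendsto_add)
    fix e :: real
    assume "e > 0"
    then obtain N M where
      N: "\<forall>p\<ge>N. \<forall>q\<ge>N. form_bounded (e / 2) (kminus (b p) (b q))" and
      M: "\<forall>p\<ge>M. \<forall>q\<ge>M. form_bounded (e / 2) (kminus (c p) (c q))"
      using b(3) c(3) half_gt_zero by meson
    have "form_bounded e (kminus (kadd (b p) (c p)) (kadd (b q) (c q)))"
      if "p \<ge> max N M" "q \<ge> max N M" for p q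
    proof -
      have "form_bounded (e / 2 + e / 2) (kadd (kminus (b p) (b q)) (kminus (c p) (c q)))"
        using N M that by (intro form_bounded_kadd) auto
      then show ?thesis
        by (simp add: kminus_kadd)
    qed
    then show "\<exists>N. \<forall>p\<ge>N. \<forall>q\<ge>N. form_bounded e (kminus (kadd (b p) (c p)) (kadd (b q) (c q)))"
      by blast
  qed
qed

lemma quasi_local_kscale:
  fixes K :: "'h::finite kernel"
  assumes "K \<in> quasi_local"
  shows "kscale a K \<in> quasi_local"
proof -
  obtain b where b: "\<And>n. local_elem (b n)" "\<And>w w'. (\<lambda>n. b n w w') \<longlonglongrightarrow> K w w'"
    "\<And>e. e > 0 \<Longrightarrow> \<exists>N. \<forall>p\<ge>N. \<forall>q\<ge>N. form_bounded e (kminus (b p) (b q))"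
    using assms by (rule quasi_localE) blast
  show ?thesis
  proof (rule quasi_localI[where b = "\<lambda>n. kscale a (b n)"])
    show "local_elem (kscale a (b n))" for n
      using b(1) by (rule local_elem_kscale)
    show "(\<lambda>n. kscale a (b n) w w') \<longlonglongrightarrow> kscale a K w w'" for w w'
      unfolding kscale_def using b(2) by (rule tendsto_mult_left)
    fix e :: real
    assume "e > 0"
    have "cmod a + 1 > 0"
      by (simp add: add_nonneg_pos)
    then have "e / (cmod a + 1) > 0"
      using \<open>e > 0\<close> by simp
    then obtain N where N: "\<forall>p\<ge>N. \<forall>q\<ge>N. form_bounded (e / (cmod a + 1)) (kminus (b p) (b q))"
      using b(3) by blast
    have small: "cmod a * (e / (cmod a + 1)) \<le> e"
      using \<open>e > 0\<close> \<open>cmod a + 1 > 0\<close> by (simp add: pos_divide_le_eq)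
    have "form_bounded e (kminus (kscale a (b p)) (kscale a (b q)))" if "p \<ge> N" "q \<ge> N" for p q
      unfolding kminus_kscale using N that form_bounded_mono[OF form_bounded_kscale small] by blast
    then show "\<exists>N. \<forall>p\<ge>N. \<forall>q\<ge>N. form_bounded e (kminus (kscale a (b p)) (kscale a (b q)))"
      by blast
  qed
qed

lemma quasi_local_kadj:
  fixes K :: "'h::finite kernel"
  assumes "K \<in> quasi_local"
  shows "kadj K \<in> quasi_local"
proof -
  obtain b where b: "\<And>n. local_elem (b n)" "\<And>w w'. (\<lambda>n. b n w w') \<longlonglongrightarrow> K w w'"
    "\<And>e. e > 0 \<Longrightarrow> \<exists>N. \<forall>p\<ge>N. \<forall>q\<ge>N. form_bounded e (kminus (b p) (b q))"
    using assms by (rule quasi_localE) blast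
  show ?thesis
  proof (rule quasi_localI[where b = "\<lambda>n. kadj (b n)"])
    show "local_elem (kadj (b n))" for n
      using b(1) by (rule local_elem_kadj)
    show "(\<lambda>n. kadj (b n) w w') \<longlonglongrightarrow> kadj K w w'" for w w'
      unfolding kadj_def using b(2) by (rule tendsto_cnj)
    show "\<exists>N. \<forall>p\<ge>N. \<forall>q\<ge>N. form_bounded e (kminus (kadj (b p)) (kadj (b q)))" if "e > 0" for e
      unfolding kminus_kadj using b(3)[OF that] form_bounded_kadj by blast
  qed
qed

lemma quasi_local_kminus:
  fixes K L :: "'h::finite kernel"
  shows "K \<in> quasi_local \<Longrightarrow> L \<in> quasi_local \<Longrightarrow> kminus K L \<in> quasi_local"
  unfolding kminus_eq_kadd_kscale by (intro quasi_local_kadd quasi_local_kscale)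

lemma quasi_local_approx:
  fixes K :: "'h::finite kernel"
  assumes "K \<in> quasi_local" "e > 0"
  obtains p where "local_elem p" "form_bounded e (kminus K p)"
proof -
  obtain b where b: "\<And>n. local_elem (b n)" "\<And>w w'. (\<lambda>n. b n w w') \<longlonglongrightarrow> K w w'"
    "\<And>e. e > 0 \<Longrightarrow> \<exists>N. \<forall>p\<ge>N. \<forall>q\<ge>N. form_bounded e (kminus (b p) (b q))"
    using assms(1) by (rule quasi_localE) blast
  obtain N where N: "\<forall>p\<ge>N. \<forall>q\<ge>N. form_bounded e (kminus (b p) (b q))"
    using b(3) assms(2) by blast
  have "form_bounded e (kminus K (b N))"
    by (rule form_bounded_tendsto[where F = "\<lambda>q. kminus (b q) (b N)" and N = N])
      (use b(2) N in \<open>auto simp: kminus_def intro: tendsto_diff\<close>)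
  then show ?thesis
    using b(1) that by blast
qed

lemma quasi_local_form_bounded:
  fixes K :: "'h::finite kernel"
  assumes "K \<in> quasi_local"
  obtains r where "form_bounded r K"
proof -
  obtain p where p: "local_elem p" "form_bounded 1 (kminus K p)"
    using quasi_local_approx[OF assms zero_less_one] by blast
  obtain r where "form_bounded r p"
    using local_elem_form_bounded[OF p(1)] by blast
  then have "form_bounded (1 + r) (kadd (kminus K p) p)"
    using p(2) by (rule form_bounded_kadd[rotated])
  moreover have "kadd (kminus K p) p = K"
    by (simp add: kadd_def kminus_def fun_eq_iff)
  ultimately show ?thesis
    using that by metis
qed

section \<open>States\<close>

lemma
  assumes "is_state \<phi>"
  shows state_kadd: "K \<in> quasi_local \<Longrightarrow> L \<in> quasi_local \<Longrightarrow> \<phi> (kadd K L) = \<phi> K + \<phi> L"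
    and state_kscale: "K \<in> quasi_local \<Longrightarrow> \<phi> (kscale c K) = c * \<phi> K"
    and state_kpos: "K \<in> quasi_local \<Longrightarrow> kpos K \<Longrightarrow> Im (\<phi> K) = 0 \<and> 0 \<le> Re (\<phi> K)"
    and state_kone: "\<phi> kone = 1"
  using assms unfolding is_state_def by simp_all
lemma state_kminus:
  fixes K L :: "'h::finite kernel"
  shows "is_state \<phi> \<Longrightarrow> K \<in> quasi_local \<Longrightarrow> L \<in> quasi_local \<Longrightarrow> \<phi> (kminus K L) = \<phi> K - \<phi> L"
  by (simp add: kminus_eq_kadd_kscale state_kadd state_kscale quasi_local_kscale)

lemma Im_kform_selfadjoint:
  assumes "kadj h = h"
  shows "Im (kform u h u) = 0"
proof -
  have "cnj (kform u h u) = kform u h u"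
    using kform_kadj[of u h u] unfolding assms by (rule sym)
  then have "Im (cnj (kform u h u)) = Im (kform u h u)"
    by (rule arg_cong)
  then show ?thesis
    by simp
qed

lemma abs_Re_kform_le:
  assumes "form_bounded r h" "fin_vec u"
  shows "\<bar>Re (kform u h u)\<bar> \<le> r * (vnorm u)\<^sup>2"
proof -
  have "\<bar>Re (kform u h u)\<bar> \<le> cmod (kform u h u)"
    by (rule abs_Re_le_cmod)
  also have "\<dots> \<le> r * vnorm u * vnorm u"
    using assms unfolding form_bounded_def by blast
  finally show ?thesis
    by (simp add: power2_eq_square mult.assoc)
qed

lemma kpos_kscale: "0 \<le> c \<Longrightarrow> kpos K \<Longrightarrow> kpos (kscale (of_real c) K)"
  unfolding kpos_def kform_kscale by simp

lemma kpos_selfadjoint_shift: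
  fixes h :: "'h kernel"
  assumes "kadj h = h" "form_bounded r h"
  shows "kpos (kadd (kscale (of_real r) kone) h)" "kpos (kminus (kscale (of_real r) kone) h)"
proof -
  have bounds: "Im (kform u h u) = 0 \<and> \<bar>Re (kform u h u)\<bar> \<le> r * (vnorm u)\<^sup>2" if "fin_vec u" for u
    using Im_kform_selfadjoint[OF assms(1)] abs_Re_kform_le[OF assms(2) that] by auto
  show "kpos (kadd (kscale (of_real r) kone) h)"
    unfolding kpos_def
  proof (intro allI impI)
    fix u :: "(int \<Rightarrow> 'h) \<Rightarrow> complex"
    assume "fin_vec u"
    then have "kform u (kadd (kscale (of_real r) kone) h) u = of_real (r * (vnorm u)\<^sup>2) + kform u h u"
      by (simp add: kform_kadd kform_kscale kform_kone)
    then show "Im (kform u (kadd (kscale (of_real r) kone) h) u) = 0 \<and>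
        0 \<le> Re (kform u (kadd (kscale (of_real r) kone) h) u)"
      using bounds[OF \<open>fin_vec u\<close>] by (simp add: abs_le_iff)
  qed
  show "kpos (kminus (kscale (of_real r) kone) h)"
    unfolding kpos_def
  proof (intro allI impI)
    fix u :: "(int \<Rightarrow> 'h) \<Rightarrow> complex"
    assume "fin_vec u"
    then have "kform u (kminus (kscale (of_real r) kone) h) u = of_real (r * (vnorm u)\<^sup>2) - kform u h u"
      by (simp add: kform_kminus kform_kscale kform_kone)
    then show "Im (kform u (kminus (kscale (of_real r) kone) h) u) = 0 \<and>
        0 \<le> Re (kform u (kminus (kscale (of_real r) kone) h) u)"
      using bounds[OF \<open>fin_vec u\<close>] by (simp add: abs_le_iff)
  qed
qed

lemma state_selfadjoint_bound:
  fixes h :: "'h::finite kernel"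
  assumes \<phi>: "is_state \<phi>" and h: "h \<in> quasi_local" and "kadj h = h" "form_bounded r h"
  shows "cmod (\<phi> h) \<le> r"
proof -
  define R where "R = kscale (of_real r) (kone :: 'h kernel)"
  have R: "R \<in> quasi_local"
    unfolding R_def by (rule quasi_local_kscale[OF quasi_local_kone])
  have "\<phi> R = of_real r"
    unfolding R_def by (simp add: state_kscale[OF \<phi> quasi_local_kone] state_kone[OF \<phi>])
  then have "\<phi> (kadd R h) = of_real r + \<phi> h" "\<phi> (kminus R h) = of_real r - \<phi> h"
    by (simp_all add: state_kadd[OF \<phi> R h] state_kminus[OF \<phi> R h])
  moreover have "Im (\<phi> (kadd R h)) = 0 \<and> 0 \<le> Re (\<phi> (kadd R h))"
    using quasi_local_kadd[OF R h] kpos_selfadjoint_shift(1)[OF assms(3,4)] unfolding R_def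
    by (rule state_kpos[OF \<phi>])
  moreover have "Im (\<phi> (kminus R h)) = 0 \<and> 0 \<le> Re (\<phi> (kminus R h))"
    using quasi_local_kminus[OF R h] kpos_selfadjoint_shift(2)[OF assms(3,4)] unfolding R_def
    by (rule state_kpos[OF \<phi>])
  ultimately have "Im (\<phi> h) = 0" "\<bar>Re (\<phi> h)\<bar> \<le> r"
    by auto
  then show ?thesis
    by (simp add: cmod_eq_Re)
qed

definition kre :: "'h kernel \<Rightarrow> 'h kernel" where
  "kre b = kscale (1 / 2) (kadd b (kadj b))"

definition kim :: "'h kernel \<Rightarrow> 'h kernel" where
  "kim b = kscale (- \<i> / 2) (kminus b (kadj b))"

lemma kadj_kre: "kadj (kre b) = kre b"
  by (simp add: kre_def kadj_def kadd_def kscale_def fun_eq_iff algebra_simps)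

lemma kadj_kim: "kadj (kim b) = kim b"
  by (simp add: kim_def kadj_def kminus_def kscale_def fun_eq_iff algebra_simps)

lemma kre_kim_decomp: "kadd (kre b) (kscale \<i> (kim b)) = b"
  by (simp add: kre_def kim_def kadj_def kadd_def kminus_def kscale_def fun_eq_iff field_simps)

lemma form_bounded_kre:
  assumes "form_bounded r b"
  shows "form_bounded r (kre b)"
proof -
  have "form_bounded (cmod (1 / 2) * (r + r)) (kre b)"
    unfolding kre_def by (intro form_bounded_kscale form_bounded_kadd form_bounded_kadj assms)
  then show ?thesis
    by simp
qed

lemma form_bounded_kim:
  assumes "form_bounded r b"
  shows "form_bounded r (kim b)"
proof -
  have "form_bounded (cmod (- \<i> / 2) * (r + r)) (kim b)"
    unfolding kim_def by (intro form_bounded_kscale form_bounded_kminus form_bounded_kadj assms)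
  then show ?thesis
    by (simp add: norm_divide)
qed

lemma local_elem_kre: "local_elem b \<Longrightarrow> local_elem (kre b)"
  unfolding local_elem_def kre_def by (blast intro: local_on_kscale local_on_kadd local_on_kadj)

lemma local_elem_kim: "local_elem b \<Longrightarrow> local_elem (kim b)"
  unfolding local_elem_def kim_def by (blast intro: local_on_kscale local_on_kminus local_on_kadj)

lemma quasi_local_kre: "(b :: 'h::finite kernel) \<in> quasi_local \<Longrightarrow> kre b \<in> quasi_local"
  unfolding kre_def by (intro quasi_local_kscale quasi_local_kadd quasi_local_kadj)

lemma quasi_local_kim: "(b :: 'h::finite kernel) \<in> quasi_local \<Longrightarrow> kim b \<in> quasi_local"
  unfolding kim_def by (intro quasi_local_kscale quasi_local_kminus quasi_local_kadj)

lemma state_kre_kim: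
  fixes b :: "'h::finite kernel"
  assumes "is_state \<phi>" "b \<in> quasi_local"
  shows "\<phi> b = \<phi> (kre b) + \<i> * \<phi> (kim b)"
proof -
  have "\<phi> b = \<phi> (kadd (kre b) (kscale \<i> (kim b)))"
    by (simp only: kre_kim_decomp)
  also have "\<dots> = \<phi> (kre b) + \<phi> (kscale \<i> (kim b))"
    using quasi_local_kre[OF assms(2)] quasi_local_kscale[OF quasi_local_kim[OF assms(2)]]
    by (rule state_kadd[OF assms(1)])
  also have "\<phi> (kscale \<i> (kim b)) = \<i> * \<phi> (kim b)"
    using quasi_local_kim[OF assms(2)] by (rule state_kscale[OF assms(1)])
  finally show ?thesis .
qed

lemma state_bound:
  fixes b :: "'h::finite kernel"
  assumes "is_state \<phi>" "b \<in> quasi_local" "form_bounded r b"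
  shows "cmod (\<phi> b) \<le> 2 * r"
proof -
  have "cmod (\<phi> (kre b)) \<le> r"
    using assms(1) quasi_local_kre[OF assms(2)] kadj_kre form_bounded_kre[OF assms(3)]
    by (rule state_selfadjoint_bound)
  moreover have "cmod (\<phi> (kim b)) \<le> r"
    using assms(1) quasi_local_kim[OF assms(2)] kadj_kim form_bounded_kim[OF assms(3)]
    by (rule state_selfadjoint_bound)
  ultimately show ?thesis
    using state_kre_kim[OF assms(1,2)] norm_triangle_ineq[of "\<phi> (kre b)" "\<i> * \<phi> (kim b)"]
    by (simp add: norm_mult)
qed

lemma bounded_range_state:
  fixes W :: "'x \<Rightarrow> 'h::finite kernel \<Rightarrow> complex"
  assumes "\<And>x. is_state (W x)" "b \<in> quasi_local"
  shows "bounded (range (\<lambda>x. W x b))"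
proof -
  obtain r where "form_bounded r b"
    using assms(2) by (rule quasi_local_form_bounded)
  then show ?thesis
    using state_bound[OF assms(1) assms(2)] by (auto simp: bounded_iff)
qed

section \<open>Decaying input memory and anticipation\<close>

lemma DIMA_cyl_uniformly_continuous:
  assumes "DIMA W" "local_on {n..n + int k} b" "kpos b" "kpos (kminus kone b)"
  shows "cyl_uniformly_continuous (\<lambda>x. W x b)"
  unfolding cyl_uniformly_continuous_def
proof (intro allI impI)
  fix e :: real
  assume "e > 0"
  then obtain m a :: nat where D: "\<And>x x'. \<forall>i. n - int m \<le> i \<and> i \<le> n + int k + int a \<longrightarrow> x i = x' i
      \<Longrightarrow> cmod (W x b - W x' b) \<le> e"
    using assms unfolding DIMA_def by (meson order_refl)
  define N where "N = nat (max \<bar>n - int m\<bar> \<bar>n + int k + int a\<bar>)"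
  have "cmod (W x b - W y b) \<le> e" if "agree_upto N x y" for x y
  proof (rule D, intro allI impI)
    fix i
    assume "n - int m \<le> i \<and> i \<le> n + int k + int a"
    then have "- int N \<le> i \<and> i \<le> int N"
      unfolding N_def by linarith
    then show "x i = y i"
      using that by (simp add: agree_upto_def)
  qed
  then show "\<exists>N. \<forall>x y. agree_upto N x y \<longrightarrow> cmod (W x b - W y b) \<le> e"
    by blast
qed

text \<open>For \<open>-r \<le> s \<le> r\<close> this is the effect \<open>(s + r) / 2r\<close>, i.e. \<open>0 \<le> keffect r s \<le> 1\<close>.\<close>
definition keffect :: "real \<Rightarrow> 'h kernel \<Rightarrow> 'h kernel" where
  "keffect r s = kscale (of_real (1 / (2 * r))) (kadd (kscale (of_real r) kone) s)"

lemma local_on_keffect: "local_on I s \<Longrightarrow> local_on I (keffect r s)"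
  unfolding keffect_def by (intro local_on_kscale local_on_kadd local_on_kone)

lemma kpos_keffect:
  fixes s :: "'h kernel"
  assumes "kadj s = s" "form_bounded r s" "r > 0"
  shows "kpos (keffect r s)" "kpos (kminus kone (keffect r s))"
proof -
  show "kpos (keffect r s)"
    unfolding keffect_def using assms kpos_selfadjoint_shift(1) by (intro kpos_kscale) auto
  have eq: "kminus kone (keffect r s) = kscale (of_real (1 / (2 * r))) (kminus (kscale (of_real r) kone) s)"
    using \<open>r > 0\<close> by (simp add: keffect_def kminus_def kadd_def kscale_def fun_eq_iff field_simps)
  show "kpos (kminus kone (keffect r s))"
    unfolding eq using assms kpos_selfadjoint_shift(2) by (intro kpos_kscale) auto
qed

lemma state_keffect:
  fixes s :: "'h::finite kernel"
  assumes \<phi>: "is_state \<phi>" and "s \<in> quasi_local" "r > 0"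
  shows "\<phi> s = of_real (2 * r) * \<phi> (keffect r s) - of_real r"
proof -
  have R: "kscale (of_real r) (kone :: 'h kernel) \<in> quasi_local"
    by (rule quasi_local_kscale[OF quasi_local_kone])
  have "\<phi> (keffect r s) = of_real (1 / (2 * r)) * (of_real r + \<phi> s)"
    unfolding keffect_def using assms(2) R
    by (simp add: state_kscale[OF \<phi>] state_kadd[OF \<phi>] state_kone[OF \<phi>] quasi_local_kadd quasi_local_kone)
  then show ?thesis
    using \<open>r > 0\<close> by (simp add: field_simps)
qed

lemma DIMA_selfadjoint_local:
  fixes W :: "(int \<Rightarrow> 'a) \<Rightarrow> 'h::finite kernel \<Rightarrow> complex"
  assumes st: "\<And>x. is_state (W x)" and "DIMA W" and "local_elem s" and "kadj s = s"
  shows "cyl_uniformly_continuous (\<lambda>x. W x s)"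
proof -
  obtain n k where loc: "local_on {n..n + int k} s"
    using \<open>local_elem s\<close> by (rule local_elemE)
  obtain r0 where "0 \<le> r0" "form_bounded r0 s"
    using \<open>local_elem s\<close> by (rule local_elem_form_bounded)
  define r where "r = r0 + 1"
  have "r > 0" "form_bounded r s"
    using \<open>0 \<le> r0\<close> \<open>form_bounded r0 s\<close> by (simp_all add: r_def form_bounded_mono)
  note P = kpos_keffect[OF \<open>kadj s = s\<close> \<open>form_bounded r s\<close> \<open>r > 0\<close>]
  have "cyl_uniformly_continuous (\<lambda>x. W x (keffect r s))"
    using \<open>DIMA W\<close> local_on_keffect[OF loc] P(1) P(2) by (rule DIMA_cyl_uniformly_continuous)
  then have "cyl_uniformly_continuous (\<lambda>x. of_real (2 * r) * W x (keffect r s) + - of_real r)"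
    by (rule cyl_uniformly_continuous_affine)
  moreover have "W x s = of_real (2 * r) * W x (keffect r s) + - of_real r" for x
    using state_keffect[OF st local_elem_quasi_local[OF \<open>local_elem s\<close>] \<open>r > 0\<close>] by simp
  ultimately show ?thesis
    by simp
qed

lemma DIMA_local:
  fixes W :: "(int \<Rightarrow> 'a) \<Rightarrow> 'h::finite kernel \<Rightarrow> complex"
  assumes st: "\<And>x. is_state (W x)" and "DIMA W" and "local_elem b"
  shows "cyl_uniformly_continuous (\<lambda>x. W x b)"
proof -
  have "cyl_uniformly_continuous (\<lambda>x. W x (kre b))" "cyl_uniformly_continuous (\<lambda>x. W x (kim b))"
    using assms by (auto intro!: DIMA_selfadjoint_local local_elem_kre local_elem_kim kadj_kre kadj_kim)
  then have "cyl_uniformly_continuous (\<lambda>x. W x (kre b) + (\<i> * W x (kim b) + 0))"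
    by (intro cyl_uniformly_continuous_add cyl_uniformly_continuous_affine)
  then show ?thesis
    using state_kre_kim[OF st local_elem_quasi_local[OF \<open>local_elem b\<close>]] by simp
qed

lemma DIMA_quasi_local:
  fixes W :: "(int \<Rightarrow> 'a) \<Rightarrow> 'h::finite kernel \<Rightarrow> complex"
  assumes st: "\<And>x. is_state (W x)" and "DIMA W" and "b \<in> quasi_local"
  shows "cyl_uniformly_continuous (\<lambda>x. W x b)"
proof (rule cyl_uniformly_continuous_uniform_limit)
  fix e :: real
  assume "e > 0"
  then obtain p where p: "local_elem p" "form_bounded (e / 2) (kminus b p)"
    using quasi_local_approx[OF \<open>b \<in> quasi_local\<close>, of "e / 2"] by auto
  have pq: "p \<in> quasi_local"
    using p(1) by (rule local_elem_quasi_local)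
  have "cmod (W x b - W x p) \<le> e" for x
    using state_bound[OF st quasi_local_kminus[OF \<open>b \<in> quasi_local\<close> pq] p(2)]
      state_kminus[OF st \<open>b \<in> quasi_local\<close> pq] by simp
  then show "\<exists>g. cyl_uniformly_continuous g \<and> (\<forall>x. cmod (W x b - g x) \<le> e)"
    using DIMA_local[OF st \<open>DIMA W\<close> p(1)] by blast
qed

theorem lemma3:
  fixes W :: "(int \<Rightarrow> 'a::{finite, discrete_topology}) \<Rightarrow> ((int \<Rightarrow> 'h::finite) \<Rightarrow> (int \<Rightarrow> 'h) \<Rightarrow> complex) \<Rightarrow> complex"
  assumes "cq_channel W"
  shows "(cq_K W ` quasi_local \<subseteq> {f. continuous_on UNIV f} \<longleftrightarrow>
           (\<forall>b\<in>quasi_local.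
              (\<lambda>n::nat. SUP p \<in> {(x, y). \<forall>i. - int n \<le> i \<and> i \<le> int n \<longrightarrow> x i = y i}.
                   cmod (W (fst p) b - W (snd p) b)) \<longlonglongrightarrow> 0))
       \<and> (DIMA W \<longrightarrow> cq_K W ` quasi_local \<subseteq> {f. continuous_on UNIV f})"
proof -
  have st: "\<And>x. is_state (W x)"
    using assms by (simp add: cq_channel_def)
  have continuous_iff: "cq_K W ` quasi_local \<subseteq> {f. continuous_on UNIV f} \<longleftrightarrow>
      (\<forall>b\<in>quasi_local. cyl_uniformly_continuous (\<lambda>x. W x b))"
    by (auto simp: cq_K_def continuous_iff_cyl_uniformly_continuous)
  have osc_iff: "(\<forall>b\<in>quasi_local. cyl_uniformly_continuous (\<lambda>x. W x b)) \<longleftrightarrow>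
      (\<forall>b\<in>quasi_local. window_osc (\<lambda>x. W x b) \<longlonglongrightarrow> 0)"
    using cyl_uniformly_continuous_iff_window_osc[OF bounded_range_state[of W, OF st]] by blast
  have "DIMA W \<Longrightarrow> \<forall>b\<in>quasi_local. cyl_uniformly_continuous (\<lambda>x. W x b)"
    using DIMA_quasi_local[of W, OF st] by blast
  then show ?thesis
    using continuous_iff osc_iff unfolding window_osc_def[abs_def] agree_upto_def by blast
qed

end
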